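(* Let $\Theta$ be an S4K-logic characterised by a class $\mathcal C$ of general S4K-frames (i.e. $\chi\in\Theta$ iff every $\mathfrak F\in\mathcal C$ validates $\chi$). Then the iA-logic $\rho\Theta=\{\varphi\in\mathcal L_{\multimap}\mid t(\varphi)\in\Theta\}$ is characterised by the class $\hat\rho\mathcal C=\{\hat\rho\mathfrak F\mid\mathfrak F\in\mathcal C\}$ of general $\multimap$-frames.
   Context: $\mathcal L_{i,m}$: classical bimodal language with $\Box_i,\Box_m$. An S4K-logic is a set of $\mathcal L_{i,m}$-formulae containing all classical tautologies, the $\mathsf K$ axioms for $\Box_i$ and $\Box_m$, and $\Box_ip\to p$, $\Box_ip\to\Box_i\Box_ip$, closed under modus ponens, necessitation for both boxes and uniform substitution. The translation $t:\mathcal L_{\multimap}\to\mathcal L_{i,m}$: $t(p)=\Box_ip$, $t(\top)=\top$, $t(\bot)=\bot$, $t(\varphi\star\psi)=\Box_i(t\varphi\star t\psi)$ for $\star\in\{\wedge,\vee,\to\}$, $t(\varphi\multimap\psi)=\Box_i\Box_m(t\varphi\to t\psi)$. General S4K-frames $(X,R_i,R_m,P)$: $R_i$ preorder, $P$ a Boolean subalgebra of $\mathcal P(X)$ closed under $[i]$ and $[m]$ (universal modalities along $R_i$, $R_m$); validity uses valuations into $P$. $\hat\rho\mathfrak F:=([X],[R_i],[R_m^*],\hat\rho P)$ where $xR_m^*z$ iff $\exists y(xR_iy\wedge yR_mz)$; $[x]$ is the class of $x$ under $x\sim y\iff xR_iy\wedge yR_ix$; $[x][R_i][y]$ iff $xR_iy$;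 $[x][R_m^*][y]$ iff $xR_m^*y'$ for some $y'\sim y$; $\hat\rho P=\{\{[x]\mid x\in[i]b\}\mid b\in P\}$. Validity in a general $\multimap$-frame $(Y,\preceq,\sqsubset,Q)$: under all valuations into $Q$ the truth set is $Y$, with $\to$ interpreted along $\preceq$ and $\multimap$ along $\sqsubset$ ($a\Rrightarrow b=\{x\mid\forall y(x\sqsubset y,y\in a\Rightarrow y\in b)\}$). *)

theory Defs
  imports Main
begin

datatype mfm = MVar nat | MTop | MBot | MNeg mfm | MAnd mfm mfm | MOr mfm mfm
  | MImp mfm mfm | BoxI mfm | BoxM mfm

fun msubst :: "(nat \<Rightarrow> mfm) \<Rightarrow> mfm \<Rightarrow> mfm" where
  "msubst s (MVar p) = s p"
| "msubst s MTop = MTop"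
| "msubst s MBot = MBot"
| "msubst s (MNeg a) = MNeg (msubst s a)"
| "msubst s (MAnd a b) = MAnd (msubst s a) (msubst s b)"
| "msubst s (MOr a b) = MOr (msubst s a) (msubst s b)"
| "msubst s (MImp a b) = MImp (msubst s a) (msubst s b)"
| "msubst s (BoxI a) = BoxI (msubst s a)"
| "msubst s (BoxM a) = BoxM (msubst s a)"

text \<open>Classical tautologies: true under every Boolean valuation, with modal
  subformulas treated as atoms.\<close>
fun bool_eval :: "(mfm \<Rightarrow> bool) \<Rightarrow> mfm \<Rightarrow> bool" where
  "bool_eval v (MVar p) = v (MVar p)"
| "bool_eval v MTop = True"
| "bool_eval v MBot = False"
| "bool_eval v (MNeg a) = (\<not> bool_eval v a)"
| "bool_eval v (MAnd a b) = (bool_eval v a \<and> bool_eval v b)"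
| "bool_eval v (MOr a b) = (bool_eval v a \<or> bool_eval v b)"
| "bool_eval v (MImp a b) = (bool_eval v a \<longrightarrow> bool_eval v b)"
| "bool_eval v (BoxI a) = v (BoxI a)"
| "bool_eval v (BoxM a) = v (BoxM a)"

definition tautology :: "mfm \<Rightarrow> bool" where
  "tautology a \<longleftrightarrow> (\<forall>v. bool_eval v a)"

definition S4K_logic :: "mfm set \<Rightarrow> bool" where
  "S4K_logic L \<longleftrightarrow>
     (\<forall>a. tautology a \<longrightarrow> a \<in> L)
   \<and> (\<forall>a b. MImp (BoxI (MImp a b)) (MImp (BoxI a) (BoxI b)) \<in> L)
   \<and> (\<forall>a b. MImp (BoxM (MImp a b)) (MImp (BoxM a) (BoxM b)) \<in> L)
   \<and> MImp (BoxI (MVar 0)) (MVar 0) \<in> L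
   \<and> MImp (BoxI (MVar 0)) (BoxI (BoxI (MVar 0))) \<in> L
   \<and> (\<forall>a b. a \<in> L \<longrightarrow> MImp a b \<in> L \<longrightarrow> b \<in> L)
   \<and> (\<forall>a. a \<in> L \<longrightarrow> BoxI a \<in> L)
   \<and> (\<forall>a. a \<in> L \<longrightarrow> BoxM a \<in> L)
   \<and> (\<forall>a s. a \<in> L \<longrightarrow> msubst s a \<in> L)"

datatype ifm = IVar nat | ITop | IBot | IAnd ifm ifm | IOr ifm ifm | IImp ifm ifm
  | ILolli ifm ifm

fun trans_t :: "ifm \<Rightarrow> mfm" where
  "trans_t (IVar p) = BoxI (MVar p)"
| "trans_t ITop = MTop"
| "trans_t IBot = MBot"
| "trans_t (IAnd a b) = BoxI (MAnd (trans_t a) (trans_t b))"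
| "trans_t (IOr a b) = BoxI (MOr (trans_t a) (trans_t b))"
| "trans_t (IImp a b) = BoxI (MImp (trans_t a) (trans_t b))"
| "trans_t (ILolli a b) = BoxI (BoxM (MImp (trans_t a) (trans_t b)))"

definition rho_logic :: "mfm set \<Rightarrow> ifm set" where
  "rho_logic L = {\<phi>. trans_t \<phi> \<in> L}"

record 'a s4k_frame =
  carrier :: "'a set"
  Ri :: "('a \<times> 'a) set"
  Rm :: "('a \<times> 'a) set"
  Adm :: "'a set set"

definition box_rel :: "'a set \<Rightarrow> ('a \<times> 'a) set \<Rightarrow> 'a set \<Rightarrow> 'a set" where
  "box_rel X R a = {x \<in> X. \<forall>y. (x, y) \<in> R \<longrightarrow> y \<in> a}"

definition general_S4K_frame :: "'a s4k_frame \<Rightarrow> bool" where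
  "general_S4K_frame F \<longleftrightarrow>
     Ri F \<subseteq> carrier F \<times> carrier F \<and> Rm F \<subseteq> carrier F \<times> carrier F
   \<and> (\<forall>x\<in>carrier F. (x, x) \<in> Ri F) \<and> trans (Ri F)
   \<and> Adm F \<subseteq> Pow (carrier F)
   \<and> carrier F \<in> Adm F
   \<and> (\<forall>a\<in>Adm F. carrier F - a \<in> Adm F)
   \<and> (\<forall>a\<in>Adm F. \<forall>b\<in>Adm F. a \<inter> b \<in> Adm F)
   \<and> (\<forall>a\<in>Adm F. box_rel (carrier F) (Ri F) a \<in> Adm F)
   \<and> (\<forall>a\<in>Adm F. box_rel (carrier F) (Rm F) a \<in> Adm F)"

fun mtruth :: "'a s4k_frame \<Rightarrow> (nat \<Rightarrow> 'a set) \<Rightarrow> mfm \<Rightarrow> 'a set" where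
  "mtruth F V (MVar p) = V p"
| "mtruth F V MTop = carrier F"
| "mtruth F V MBot = {}"
| "mtruth F V (MNeg a) = carrier F - mtruth F V a"
| "mtruth F V (MAnd a b) = mtruth F V a \<inter> mtruth F V b"
| "mtruth F V (MOr a b) = mtruth F V a \<union> mtruth F V b"
| "mtruth F V (MImp a b) = (carrier F - mtruth F V a) \<union> mtruth F V b"
| "mtruth F V (BoxI a) = box_rel (carrier F) (Ri F) (mtruth F V a)"
| "mtruth F V (BoxM a) = box_rel (carrier F) (Rm F) (mtruth F V a)"

definition mvalid :: "'a s4k_frame \<Rightarrow> mfm \<Rightarrow> bool" where
  "mvalid F a \<longleftrightarrow> (\<forall>V. (\<forall>p. V p \<in> Adm F) \<longrightarrow> mtruth F V a = carrier F)"

record 'b lolli_frame =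
  lcarrier :: "'b set"
  leq :: "('b \<times> 'b) set"
  lrel :: "('b \<times> 'b) set"
  ladm :: "'b set set"

definition rel_imp :: "'b set \<Rightarrow> ('b \<times> 'b) set \<Rightarrow> 'b set \<Rightarrow> 'b set \<Rightarrow> 'b set" where
  "rel_imp Y R a b = {x \<in> Y. \<forall>y. (x, y) \<in> R \<longrightarrow> y \<in> a \<longrightarrow> y \<in> b}"

fun itruth :: "'b lolli_frame \<Rightarrow> (nat \<Rightarrow> 'b set) \<Rightarrow> ifm \<Rightarrow> 'b set" where
  "itruth G V (IVar p) = V p"
| "itruth G V ITop = lcarrier G"
| "itruth G V IBot = {}"
| "itruth G V (IAnd a b) = itruth G V a \<inter> itruth G V b"
| "itruth G V (IOr a b) = itruth G V a \<union> itruth G V b"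
| "itruth G V (IImp a b) = rel_imp (lcarrier G) (leq G) (itruth G V a) (itruth G V b)"
| "itruth G V (ILolli a b) = rel_imp (lcarrier G) (lrel G) (itruth G V a) (itruth G V b)"

definition ivalid :: "'b lolli_frame \<Rightarrow> ifm \<Rightarrow> bool" where
  "ivalid G a \<longleftrightarrow> (\<forall>V. (\<forall>p. V p \<in> ladm G) \<longrightarrow> itruth G V a = lcarrier G)"

definition cls :: "'a s4k_frame \<Rightarrow> 'a \<Rightarrow> 'a set" where
  "cls F x = {y \<in> carrier F. (x, y) \<in> Ri F \<and> (y, x) \<in> Ri F}"

definition Rm_star :: "'a s4k_frame \<Rightarrow> ('a \<times> 'a) set" where
  "Rm_star F = {(x, z). \<exists>y. (x, y) \<in> Ri F \<and> (y, z) \<in> Rm F}"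

definition rho_hat :: "'a s4k_frame \<Rightarrow> 'a set lolli_frame" where
  "rho_hat F = \<lparr> lcarrier = cls F ` carrier F,
     leq = {(cls F x, cls F y) | x y. x \<in> carrier F \<and> y \<in> carrier F \<and> (x, y) \<in> Ri F},
     lrel = {(cls F x, cls F y) | x y. x \<in> carrier F \<and> y \<in> carrier F \<and>
               (\<exists>y'. y' \<in> cls F y \<and> (x, y') \<in> Rm_star F)},
     ladm = {cls F ` box_rel (carrier F) (Ri F) b | b. b \<in> Adm F} \<rparr>"

end

theory Submission
  imports Defs
begin

text \<open>Every translation t(\<phi>) is true on an R_i-upset, and the map x \<mapsto> [x] identifies
  R_i-upsets of a general S4K-frame F with the upsets of its skeleton rho-hat F. Under this
  identification the truth set of \<phi> in rho-hat F is the image of the truth set of t(\<phi>) in F,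
  for corresponding valuations; hence F validates t(\<phi>) iff rho-hat F validates \<phi>, and the
  characterisation of \<Theta> by \<C> transfers pointwise to rho \<Theta> and rho-hat \<C>.\<close>

definition Ri_upset :: "'a s4k_frame \<Rightarrow> 'a set \<Rightarrow> bool" where
  "Ri_upset F U \<longleftrightarrow> U \<subseteq> carrier F \<and> (\<forall>x y. x \<in> U \<longrightarrow> (x, y) \<in> Ri F \<longrightarrow> y \<in> U)"

definition cls_lift :: "'a s4k_frame \<Rightarrow> ('a \<times> 'a) set \<Rightarrow> ('a set \<times> 'a set) set" where
  "cls_lift F Q = {(cls F x, cls F y) | x y. x \<in> carrier F \<and> y \<in> carrier F \<and>
     (\<exists>y'. y' \<in> cls F y \<and> (x, y') \<in> Q)}"

lemma general_S4K_frameD: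
  assumes "general_S4K_frame F"
  shows "Ri F \<subseteq> carrier F \<times> carrier F" "Rm F \<subseteq> carrier F \<times> carrier F"
    "\<And>x. x \<in> carrier F \<Longrightarrow> (x, x) \<in> Ri F" "trans (Ri F)"
  using assms unfolding general_S4K_frame_def by auto

lemma cls_self:
  assumes F: "general_S4K_frame F" and x: "x \<in> carrier F"
  shows "x \<in> cls F x"
  using general_S4K_frameD(3)[OF F x] x unfolding cls_def by simp

lemma cls_eq_iff:
  assumes F: "general_S4K_frame F" and x: "x \<in> carrier F" and y: "y \<in> carrier F"
  shows "cls F x = cls F y \<longleftrightarrow> (x, y) \<in> Ri F \<and> (y, x) \<in> Ri F"
proof
  assume "cls F x = cls F y"
  then have "x \<in> cls F y" using cls_self[OF F x] by simp
  then show "(x, y) \<in> Ri F \<and> (y, x) \<in> Ri F" unfolding cls_def by auto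
next
  assume "(x, y) \<in> Ri F \<and> (y, x) \<in> Ri F"
  then show "cls F x = cls F y"
    using general_S4K_frameD(4)[OF F] unfolding cls_def by (auto dest: transD)
qed

lemma cls_mem_cls_eq:
  assumes F: "general_S4K_frame F" and "y \<in> carrier F" "y' \<in> cls F y"
  shows "y' \<in> carrier F" "cls F y' = cls F y"
  using assms cls_eq_iff[OF F, of y' y] unfolding cls_def by auto

lemma cls_in_image_iff:
  assumes F: "general_S4K_frame F" and U: "Ri_upset F U" and x: "x \<in> carrier F"
  shows "cls F x \<in> cls F ` U \<longleftrightarrow> x \<in> U"
proof
  assume "cls F x \<in> cls F ` U"
  then obtain y where y: "y \<in> U" "cls F x = cls F y" by auto
  with U have "y \<in> carrier F" unfolding Ri_upset_def by auto
  then have "(y, x) \<in> Ri F" using cls_eq_iff[OF F x] y by auto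
  then show "x \<in> U" using U y unfolding Ri_upset_def by auto
qed auto

lemma Ri_upset_subset: "Ri_upset F U \<Longrightarrow> U \<subseteq> carrier F"
  unfolding Ri_upset_def by blast

lemma cls_image_subsetD:
  assumes F: "general_S4K_frame F" and A: "A \<subseteq> carrier F" and B: "Ri_upset F B"
    and "cls F ` A \<subseteq> cls F ` B"
  shows "A \<subseteq> B"
proof
  fix a assume "a \<in> A"
  then have "a \<in> carrier F" "cls F a \<in> cls F ` B" using A assms(4) by auto
  then show "a \<in> B" using cls_in_image_iff[OF F B] by blast
qed

lemma cls_image_Int:
  assumes F: "general_S4K_frame F" and A: "Ri_upset F A" and B: "Ri_upset F B"
  shows "cls F ` (A \<inter> B) = cls F ` A \<inter> cls F ` B"
proof
  show "cls F ` A \<inter> cls F ` B \<subseteq> cls F ` (A \<inter> B)"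
  proof
    fix c assume "c \<in> cls F ` A \<inter> cls F ` B"
    then obtain a where a: "a \<in> A" "c = cls F a" "cls F a \<in> cls F ` B" by auto
    then have "a \<in> B" using cls_in_image_iff[OF F B] Ri_upset_subset[OF A] by blast
    with a show "c \<in> cls F ` (A \<inter> B)" by blast
  qed
qed (rule image_Int_subset)

lemma cls_image_eq_iff:
  assumes F: "general_S4K_frame F" and A: "Ri_upset F A" and B: "Ri_upset F B"
  shows "cls F ` A = cls F ` B \<longleftrightarrow> A = B"
proof
  assume "cls F ` A = cls F ` B"
  then have "A \<subseteq> B" "B \<subseteq> A"
    using cls_image_subsetD[OF F Ri_upset_subset[OF A] B] cls_image_subsetD[OF F Ri_upset_subset[OF B] A]
    by simp_all
  then show "A = B" by (rule subset_antisym)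
qed simp

lemma Ri_upset_carrier:
  assumes F: "general_S4K_frame F"
  shows "Ri_upset F (carrier F)"
  using general_S4K_frameD(1)[OF F] unfolding Ri_upset_def by blast

lemma Ri_upset_box_rel:
  assumes F: "general_S4K_frame F"
  shows "Ri_upset F (box_rel (carrier F) (Ri F) S)"
  using general_S4K_frameD(1,4)[OF F] unfolding Ri_upset_def box_rel_def by (auto dest: transD)

lemma box_rel_Ri_upset_eq:
  assumes F: "general_S4K_frame F" and U: "Ri_upset F U"
  shows "box_rel (carrier F) (Ri F) U = U"
  using general_S4K_frameD(3)[OF F] U unfolding Ri_upset_def box_rel_def by blast

lemma Ri_upset_Int: "Ri_upset F A \<Longrightarrow> Ri_upset F B \<Longrightarrow> Ri_upset F (A \<inter> B)"
  unfolding Ri_upset_def by blast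

lemma Ri_upset_Un: "Ri_upset F A \<Longrightarrow> Ri_upset F B \<Longrightarrow> Ri_upset F (A \<union> B)"
  unfolding Ri_upset_def by blast

lemma Ri_upset_mtruth_trans_t:
  assumes F: "general_S4K_frame F"
  shows "Ri_upset F (mtruth F V (trans_t \<phi>))"
  by (cases \<phi>) (simp_all add: Ri_upset_box_rel[OF F] Ri_upset_carrier[OF F] Ri_upset_def[of F "{}"])

lemma lrel_rho_hat: "lrel (rho_hat F) = cls_lift F (Rm_star F)"
  unfolding rho_hat_def cls_lift_def by simp

lemma leq_rho_hat:
  assumes F: "general_S4K_frame F"
  shows "leq (rho_hat F) = cls_lift F (Ri F)"
proof -
  have Ri_via_cls: "(x, y) \<in> Ri F \<longleftrightarrow> (\<exists>y'. y' \<in> cls F y \<and> (x, y') \<in> Ri F)"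
    if "y \<in> carrier F" for x y
    using cls_self[OF F that] general_S4K_frameD(4)[OF F] unfolding cls_def
    by (auto dest: transD)
  show ?thesis unfolding rho_hat_def cls_lift_def by (simp add: Ri_via_cls cong: conj_cong)
qed

text \<open>The only property of Q needed is closure under R_i-predecessors: this is what makes
  the lifted relation independent of the chosen representative of the source class.\<close>

lemma rel_imp_cls_lift:
  assumes F: "general_S4K_frame F" and Q: "Ri F O Q \<subseteq> Q"
    and A: "Ri_upset F A" and B: "Ri_upset F B"
  shows "rel_imp (cls F ` carrier F) (cls_lift F Q) (cls F ` A) (cls F ` B)
       = cls F ` {x \<in> carrier F. \<forall>z. (x, z) \<in> Q \<longrightarrow> z \<in> A \<longrightarrow> z \<in> B}"
    (is "?lhs = cls F ` ?S")
proof
  show "?lhs \<subseteq> cls F ` ?S"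
  proof
    fix c assume c: "c \<in> ?lhs"
    then obtain x where x: "x \<in> carrier F" "c = cls F x" unfolding rel_imp_def by auto
    have "z \<in> B" if "(x, z) \<in> Q" "z \<in> A" for z
    proof -
      have z: "z \<in> carrier F" using Ri_upset_subset[OF A] that(2) by auto
      have "(c, cls F z) \<in> cls_lift F Q"
        using x z that(1) cls_self[OF F z] unfolding cls_lift_def by auto
      then have "cls F z \<in> cls F ` B" using c that(2) unfolding rel_imp_def by auto
      then show ?thesis using cls_in_image_iff[OF F B z] by simp
    qed
    then show "c \<in> cls F ` ?S" using x by auto
  qed
next
  show "cls F ` ?S \<subseteq> ?lhs"
  proof
    fix c assume "c \<in> cls F ` ?S"
    then obtain x where x: "x \<in> ?S" "c = cls F x" by auto
    have "d \<in> cls F ` B" if d: "(c, d) \<in> cls_lift F Q" "d \<in> cls F ` A" for d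
    proof -
      obtain x' y y' where xy: "cls F x = cls F x'" "x' \<in> carrier F" "y \<in> carrier F"
        "d = cls F y" "y' \<in> cls F y" "(x', y') \<in> Q"
        using d(1) x(2) unfolding cls_lift_def by auto
      have "(x, x') \<in> Ri F" using cls_eq_iff[OF F] x xy by auto
      then have "(x, y') \<in> Q" using Q xy(6) by auto
      moreover have y': "y' \<in> carrier F" "cls F y' = d"
        using cls_mem_cls_eq[OF F xy(3,5)] xy(4) by auto
      moreover have "y' \<in> A" using d(2) cls_in_image_iff[OF F A y'(1)] y' by simp
      ultimately show ?thesis using x(1) by auto
    qed
    then show "c \<in> ?lhs" using x unfolding rel_imp_def by auto
  qed
qed

lemma Ri_O_Rm_star:
  assumes F: "general_S4K_frame F"
  shows "Ri F O Rm_star F \<subseteq> Rm_star F"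
  using general_S4K_frameD(4)[OF F] unfolding Rm_star_def by (auto dest: transD)

lemma box_rel_Ri_box_rel_Rm_imp:
  assumes F: "general_S4K_frame F"
  shows "box_rel (carrier F) (Ri F) (box_rel (carrier F) (Rm F) (carrier F - A \<union> B))
       = {x \<in> carrier F. \<forall>z. (x, z) \<in> Rm_star F \<longrightarrow> z \<in> A \<longrightarrow> z \<in> B}"
  using general_S4K_frameD(1,2)[OF F] unfolding box_rel_def Rm_star_def by blast

lemma itruth_rho_hat:
  assumes F: "general_S4K_frame F"
    and W: "\<And>p. W p = cls F ` box_rel (carrier F) (Ri F) (V p)"
  shows "itruth (rho_hat F) W \<phi> = cls F ` mtruth F V (trans_t \<phi>)"
proof (induction \<phi>)
  case (IAnd a b)
  note up = Ri_upset_mtruth_trans_t[OF F, of V a] Ri_upset_mtruth_trans_t[OF F, of V b]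
  show ?case
    using IAnd cls_image_Int[OF F up] box_rel_Ri_upset_eq[OF F Ri_upset_Int[OF up]] by simp
next
  case (IOr a b)
  note up = Ri_upset_mtruth_trans_t[OF F, of V a] Ri_upset_mtruth_trans_t[OF F, of V b]
  show ?case
    using IOr box_rel_Ri_upset_eq[OF F Ri_upset_Un[OF up]] by (simp add: image_Un)
next
  case (IImp a b)
  have "Ri F O Ri F \<subseteq> Ri F" using general_S4K_frameD(4)[OF F] by (auto dest: transD)
  with IImp show ?case
    using rel_imp_cls_lift[OF F] Ri_upset_mtruth_trans_t[OF F] general_S4K_frameD(1)[OF F]
    by (simp add: leq_rho_hat[OF F]) (auto simp: rho_hat_def box_rel_def)
next
  case (ILolli a b)
  then show ?case
    using rel_imp_cls_lift[OF F Ri_O_Rm_star[OF F]] Ri_upset_mtruth_trans_t[OF F]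
    by (simp add: lrel_rho_hat box_rel_Ri_box_rel_Rm_imp[OF F]) (auto simp: rho_hat_def)
qed (simp_all add: W rho_hat_def)

lemma ivalid_rho_hat_iff:
  assumes F: "general_S4K_frame F"
  shows "ivalid (rho_hat F) \<phi> \<longleftrightarrow> mvalid F (trans_t \<phi>)"
proof -
  let ?lift = "\<lambda>V p. cls F ` box_rel (carrier F) (Ri F) (V p)"
  have adm: "(\<forall>p. W p \<in> ladm (rho_hat F)) \<longleftrightarrow> (\<exists>V. (\<forall>p. V p \<in> Adm F) \<and> W = ?lift V)"
    for W :: "nat \<Rightarrow> 'a set set"
  proof
    assume "\<forall>p. W p \<in> ladm (rho_hat F)"
    then have "\<forall>p. \<exists>b. b \<in> Adm F \<and> W p = cls F ` box_rel (carrier F) (Ri F) b"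
      by (simp add: rho_hat_def) blast
    then obtain V where "\<forall>p. V p \<in> Adm F \<and> W p = ?lift V p" by metis
    then show "\<exists>V. (\<forall>p. V p \<in> Adm F) \<and> W = ?lift V" by (intro exI[of _ V]) auto
  qed (auto simp: rho_hat_def)
  have "itruth (rho_hat F) (?lift V) \<phi> = lcarrier (rho_hat F) \<longleftrightarrow> mtruth F V (trans_t \<phi>) = carrier F"
    for V
    using itruth_rho_hat[OF F] cls_image_eq_iff[OF F Ri_upset_mtruth_trans_t[OF F]
        Ri_upset_carrier[OF F]]
    by (simp add: rho_hat_def)
  then show ?thesis unfolding ivalid_def mvalid_def adm by blast
qed

text \<open>The characterisation of \<Theta> by \<C> alone determines rho \<Theta>.\<close>

theorem proposition4p13:
  fixes \<Theta> :: "mfm set" and \<C> :: "'a s4k_frame set"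
  assumes "S4K_logic \<Theta>"
    and "\<forall>F\<in>\<C>. general_S4K_frame F"
    and "\<forall>\<chi>. \<chi> \<in> \<Theta> \<longleftrightarrow> (\<forall>F\<in>\<C>. mvalid F \<chi>)"
  shows "\<forall>\<phi>. \<phi> \<in> rho_logic \<Theta> \<longleftrightarrow> (\<forall>G\<in>rho_hat ` \<C>. ivalid G \<phi>)"
proof
  fix \<phi>
  have "\<phi> \<in> rho_logic \<Theta> \<longleftrightarrow> (\<forall>F\<in>\<C>. mvalid F (trans_t \<phi>))"
    using assms(3) by (simp add: rho_logic_def)
  also have "\<dots> \<longleftrightarrow> (\<forall>F\<in>\<C>. ivalid (rho_hat F) \<phi>)"
    using assms(2) ivalid_rho_hat_iff by blast
  finally show "\<phi> \<in> rho_logic \<Theta> \<longleftrightarrow> (\<forall>G\<in>rho_hat ` \<C>. ivalid G \<phi>)" by simp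
qed

end
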